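(* Tight GFG-NRWs are Büchi-type: every tight GFG-NRW $\mathcal{A}=\langle\Sigma,Q,Q_0,\delta,\alpha\rangle$ whose language is recognized by some GFG-NBW has an equivalent GFG-NBW on the same structure, i.e. there is a set $\alpha'\subseteq Q$ such that $\langle\Sigma,Q,Q_0,\delta,\alpha'\rangle$, viewed as a Büchi automaton, is GFG and recognizes $L(\mathcal{A})$.
   Context: An automaton $\langle\Sigma,Q,Q_0,\delta,\alpha\rangle$ has $\delta:Q\times\Sigma\to2^Q$; runs are $r_0r_1\cdots$ with $r_0\in Q_0$, $r_{i+1}\in\delta(r_i,a_{i+1})$, accepting if the set of infinitely visited states satisfies $\alpha$. Büchi ($\alpha\subseteq Q$): $S$ accepting iff $S\cap\alpha\ne\emptyset$. Rabin ($\alpha$ a set of pairs $\langle E,F\rangle$, $E$ bad, $F$ good): $S$ accepting iff some pair has $S\cap E=\emptyset$ and $S\cap F\neq\emptyset$. NRW/NBW: nondeterministic Rabin/Büchi word automaton. $\mathcal{A}$ is GFG if there is a strategy $g:\Sigma^*\to Q$ such that for every $w=a_1a_2\cdots$, $g(\epsilon),g(a_1),g(a_1a_2),\ldots$ is a run on $w$, accepting whenever $w\in L(\mathcal{A})$. Finite-state strategies are transducers $g=\langle\Sigma,Q,M,m_0,\rho,\tau\rangle$ (finite memories $M$, $\rho:M\times\Sigma\to M$ extended to words from $m_0$, $\tau:M\to Q$, $g(u)=\tau(\rho(u))$); $m$ is a memory of $q$ if $\tau(m)=q$. $\mathcal{A}_g=\langle\Sigma,M,m_0,\rho,\alpha_g\rangle$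 where $\alpha_g$ replaces each set $F$ in $\alpha$ by $\{m\mid\tau(m)\in F\}$. A transition $\langle q,a,q'\rangle$ is used by $g$ if $q=g(u)$, $q'=g(ua)$ for some $u$. For a set $P$ of finite paths, a combination is the union of state sets of a nonempty subset of $P$. For memories $m\neq m'$ with $\tau(m)=\tau(m')$, $m$ is replaceable by $m'$ if the set of paths of $\mathcal{A}_g$ from $m'$ to $m$ is empty or all its combinations are accepting w.r.t. $\alpha_g$. $\mathcal{A}$ is tight if for some finite-state strategy $g$ witnessing its GFGness, every transition of $\mathcal{A}$ is used by $g$ and no memory is replaceable by a different memory of the same state. *)

theory Defs
  imports Main
begin

text \<open>Infinite words are functions nat to letters,
  the letter w i being the (i+1)-th letter a_(i+1).\<close>

definition words :: "'a set \<Rightarrow> (nat \<Rightarrow> 'a) set" where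
  "words Sig = {w. \<forall>i. w i \<in> Sig}"

definition is_run :: "'q set \<Rightarrow> ('q \<Rightarrow> 'a \<Rightarrow> 'q set) \<Rightarrow> (nat \<Rightarrow> 'a) \<Rightarrow> (nat \<Rightarrow> 'q) \<Rightarrow> bool" where
  "is_run Q0 delta w r \<longleftrightarrow> r 0 \<in> Q0 \<and> (\<forall>i. r (Suc i) \<in> delta (r i) (w i))"

definition inf_states :: "(nat \<Rightarrow> 'q) \<Rightarrow> 'q set" where
  "inf_states r = {q. \<exists>\<^sub>\<infinity> i. r i = q}"

definition buchi_acc :: "'q set \<Rightarrow> 'q set \<Rightarrow> bool" where
  "buchi_acc alpha S \<longleftrightarrow> S \<inter> alpha \<noteq> {}"

definition rabin_acc :: "('q set \<times> 'q set) set \<Rightarrow> 'q set \<Rightarrow> bool" where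
  "rabin_acc alpha S \<longleftrightarrow> (\<exists>(E, F) \<in> alpha. S \<inter> E = {} \<and> S \<inter> F \<noteq> {})"

definition lang :: "'a set \<Rightarrow> 'q set \<Rightarrow> ('q \<Rightarrow> 'a \<Rightarrow> 'q set) \<Rightarrow> ('q set \<Rightarrow> bool) \<Rightarrow> (nat \<Rightarrow> 'a) set" where
  "lang Sig Q0 delta acc = {w \<in> words Sig. \<exists>r. is_run Q0 delta w r \<and> acc (inf_states r)}"

definition aut_wf :: "'a set \<Rightarrow> 'q set \<Rightarrow> 'q set \<Rightarrow> ('q \<Rightarrow> 'a \<Rightarrow> 'q set) \<Rightarrow> bool" where
  "aut_wf Sig Q Q0 delta \<longleftrightarrow> finite Sig \<and> finite Q \<and> Q0 \<subseteq> Q \<and>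
     (\<forall>q \<in> Q. \<forall>a \<in> Sig. delta q a \<subseteq> Q)"

definition nbw_wf :: "'a set \<Rightarrow> 'q set \<Rightarrow> 'q set \<Rightarrow> ('q \<Rightarrow> 'a \<Rightarrow> 'q set) \<Rightarrow> 'q set \<Rightarrow> bool" where
  "nbw_wf Sig Q Q0 delta alpha \<longleftrightarrow> aut_wf Sig Q Q0 delta \<and> alpha \<subseteq> Q"

definition nrw_wf :: "'a set \<Rightarrow> 'q set \<Rightarrow> 'q set \<Rightarrow> ('q \<Rightarrow> 'a \<Rightarrow> 'q set) \<Rightarrow> ('q set \<times> 'q set) set \<Rightarrow> bool" where
  "nrw_wf Sig Q Q0 delta alpha \<longleftrightarrow> aut_wf Sig Q Q0 delta \<and> finite alpha \<and>
     (\<forall>(E, F) \<in> alpha. E \<subseteq> Q \<and> F \<subseteq> Q)"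

definition pref :: "(nat \<Rightarrow> 'a) \<Rightarrow> nat \<Rightarrow> 'a list" where
  "pref w i = map w [0..<i]"

definition gfg_strategy :: "'a set \<Rightarrow> 'q set \<Rightarrow> ('q \<Rightarrow> 'a \<Rightarrow> 'q set) \<Rightarrow> ('q set \<Rightarrow> bool) \<Rightarrow> ('a list \<Rightarrow> 'q) \<Rightarrow> bool" where
  "gfg_strategy Sig Q0 delta acc g \<longleftrightarrow>
     (\<forall>w \<in> words Sig. is_run Q0 delta w (\<lambda>i. g (pref w i)) \<and>
        (w \<in> lang Sig Q0 delta acc \<longrightarrow> acc (inf_states (\<lambda>i. g (pref w i)))))"

definition gfg :: "'a set \<Rightarrow> 'q set \<Rightarrow> ('q \<Rightarrow> 'a \<Rightarrow> 'q set) \<Rightarrow> ('q set \<Rightarrow> bool) \<Rightarrow> bool" where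
  "gfg Sig Q0 delta acc \<longleftrightarrow> (\<exists>g. gfg_strategy Sig Q0 delta acc g)"

definition transducer :: "'a set \<Rightarrow> 'q set \<Rightarrow> 'm set \<Rightarrow> 'm \<Rightarrow> ('m \<Rightarrow> 'a \<Rightarrow> 'm) \<Rightarrow> ('m \<Rightarrow> 'q) \<Rightarrow> bool" where
  "transducer Sig Q M m0 rho tau \<longleftrightarrow> finite M \<and> m0 \<in> M \<and>
     (\<forall>m \<in> M. \<forall>a \<in> Sig. rho m a \<in> M) \<and> (\<forall>m \<in> M. tau m \<in> Q)"

definition strat_of :: "'m \<Rightarrow> ('m \<Rightarrow> 'a \<Rightarrow> 'm) \<Rightarrow> ('m \<Rightarrow> 'q) \<Rightarrow> 'a list \<Rightarrow> 'q" where
  "strat_of m0 rho tau u = tau (foldl rho m0 u)"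

definition mpaths :: "'a set \<Rightarrow> 'm set \<Rightarrow> ('m \<Rightarrow> 'a \<Rightarrow> 'm) \<Rightarrow> 'm \<Rightarrow> 'm \<Rightarrow> 'm list set" where
  "mpaths Sig M rho m1 m2 = {ps. ps \<noteq> [] \<and> hd ps = m1 \<and> last ps = m2 \<and> set ps \<subseteq> M \<and>
     (\<forall>i. Suc i < length ps \<longrightarrow> (\<exists>a \<in> Sig. ps ! Suc i = rho (ps ! i) a))}"

definition combinations :: "'m list set \<Rightarrow> 'm set set" where
  "combinations P = {\<Union> (set ` P') | P'. P' \<subseteq> P \<and> P' \<noteq> {}}"

definition alpha_g :: "('q set \<times> 'q set) set \<Rightarrow> 'm set \<Rightarrow> ('m \<Rightarrow> 'q) \<Rightarrow> ('m set \<times> 'm set) set" where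
  "alpha_g alpha M tau = (\<lambda>(E, F). ({m \<in> M. tau m \<in> E}, {m \<in> M. tau m \<in> F})) ` alpha"

definition replaceable :: "'a set \<Rightarrow> ('q set \<times> 'q set) set \<Rightarrow> 'm set \<Rightarrow> ('m \<Rightarrow> 'a \<Rightarrow> 'm) \<Rightarrow> ('m \<Rightarrow> 'q) \<Rightarrow> 'm \<Rightarrow> 'm \<Rightarrow> bool" where
  "replaceable Sig alpha M rho tau m m' \<longleftrightarrow> m \<noteq> m' \<and> tau m = tau m' \<and>
     (mpaths Sig M rho m' m = {} \<or>
      (\<forall>S \<in> combinations (mpaths Sig M rho m' m). rabin_acc (alpha_g alpha M tau) S))"

definition tight :: "'a set \<Rightarrow> 'q set \<Rightarrow> 'q set \<Rightarrow> ('q \<Rightarrow> 'a \<Rightarrow> 'q set) \<Rightarrow> ('q set \<times> 'q set) set \<Rightarrow> bool" where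
  "tight Sig Q Q0 delta alpha \<longleftrightarrow>
    (\<exists>(M :: nat set) m0 rho tau.
       transducer Sig Q M m0 rho tau \<and>
       gfg_strategy Sig Q0 delta (rabin_acc alpha) (strat_of m0 rho tau) \<and>
       (\<forall>q \<in> Q. \<forall>a \<in> Sig. \<forall>q' \<in> delta q a. \<exists>u \<in> lists Sig.
          strat_of m0 rho tau u = q \<and> strat_of m0 rho tau (u @ [a]) = q') \<and>
       (\<forall>m \<in> M. \<forall>m' \<in> M. \<not> replaceable Sig alpha M rho tau m m'))"

end

theory Submission
  imports Defs "HOL-Library.Omega_Words_Fun"
begin

text \<open>Take as Buchi set the states q such that every run visiting q infinitely often reads a
  word of L(A). The resulting Buchi language is contained in L(A), and the strategy g witnessing
  tightness still witnesses GFGness, provided its run on every word of L(A) visits such a state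
  infinitely often.

  Suppose it does not on some word. The memories of g visited infinitely often then form an
  accepting loop x of the transducer through a memory m. Each memory i on it carries a state lying
  on a rejecting run; as g uses every transition, g follows the cycle of that run up to switches
  between memories of equal state, and non-replaceability bridges each switch by a rejecting
  combination of paths. This gives a rejecting cycle through i, and splicing all of them into x
  yields a loop z at m with x accepting but x together with z rejecting, as unions of rejecting
  Rabin sets are rejecting.

  A GFG-NBW with strategy h for L(A) rules this out: on u x^k1 x z x^k2 x z ..., with every kj
  chosen so large that h visits an accepting state within x^kj (possible because the current
  prefix followed by x forever is in L(A)), the run of h is accepting, yet the run of g is
  rejecting.\<close>

section \<open>Visited memories and walks of a transducer\<close>

fun visits :: "('m \<Rightarrow> 'a \<Rightarrow> 'm) \<Rightarrow> 'm \<Rightarrow> 'a list \<Rightarrow> 'm set" where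
  "visits rho m [] = {m}"
| "visits rho m (a # z) = insert m (visits rho (rho m a) z)"

lemma start_in_visits [simp]: "m \<in> visits rho m z"
  by (cases z) auto

lemma visits_append: "visits rho m (z @ z') = visits rho m z \<union> visits rho (foldl rho m z) z'"
  by (induction z arbitrary: m) auto

lemma visits_split:
  "m' \<in> visits rho m z \<Longrightarrow> \<exists>z1 z2. z = z1 @ z2 \<and> foldl rho m z1 = m'"
proof (induction z arbitrary: m)
  case (Cons a z)
  show ?case
  proof (cases "m' = m")
    case True
    then show ?thesis
      by (intro exI[of _ "[]"] exI[of _ "a # z"]) simp
  next
    case False
    with Cons.prems have "m' \<in> visits rho (rho m a) z"
      by simp
    then obtain z1 z2 where "z = z1 @ z2" "foldl rho (rho m a) z1 = m'"
      using Cons.IH by blast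
    then show ?thesis
      by (intro exI[of _ "a # z1"] exI[of _ z2]) simp
  qed
qed simp

lemma foldl_in_closed:
  "\<forall>m\<in>M. \<forall>a\<in>Sig. rho m a \<in> M \<Longrightarrow> m \<in> M \<Longrightarrow> z \<in> lists Sig \<Longrightarrow> foldl rho m z \<in> M"
  by (induction z arbitrary: m) auto

lemma foldl_power_loop: "foldl rho m x = m \<Longrightarrow> foldl rho m (concat (replicate k x)) = m"
  by (induction k) auto

lemma visits_power_loop:
  "foldl rho m x = m \<Longrightarrow> visits rho m (concat (replicate k x)) \<subseteq> visits rho m x"
  by (induction k) (auto simp: visits_append foldl_power_loop)

definition memory_run :: "('m \<Rightarrow> 'a \<Rightarrow> 'm) \<Rightarrow> 'm \<Rightarrow> (nat \<Rightarrow> 'a) \<Rightarrow> nat \<Rightarrow> 'm" where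
  "memory_run rho m0 w i = foldl rho m0 (pref w i)"

lemma strat_of_pref: "strat_of m0 rho tau (pref w i) = tau (memory_run rho m0 w i)"
  by (simp add: strat_of_def memory_run_def)

lemma pref_add: "pref w (i + d) = pref w i @ map w [i..<i + d]"
  unfolding pref_def by (simp add: upt_add_eq_append[of 0 i])

lemma pref_take: "j \<le> i \<Longrightarrow> pref w j = take j (pref w i)"
  by (simp add: pref_def take_map)

lemma pref_in_lists: "w \<in> words Sig \<Longrightarrow> pref w i \<in> lists Sig"
  by (auto simp: pref_def words_def)

lemma memory_run_add:
  "memory_run rho m0 w (i + d) = foldl rho (memory_run rho m0 w i) (map w [i..<i + d])"
  by (simp add: memory_run_def pref_add)

lemma visits_memory_run:
  "visits rho (memory_run rho m0 w i) (map w [i..<i + d]) = memory_run rho m0 w ` {i..i + d}"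
proof (induction d arbitrary: i)
  case (Suc d)
  have "[i..<i + Suc d] = i # [Suc i..<Suc i + d]"
    by (simp add: upt_rec)
  moreover have "{i..i + Suc d} = insert i {Suc i..Suc i + d}"
    by auto
  moreover have "rho (memory_run rho m0 w i) (w i) = memory_run rho m0 w (Suc i)"
    using memory_run_add[of rho m0 w i 1] by simp
  ultimately show ?case
    using Suc[of "Suc i"] by simp
qed simp

definition walk :: "'a set \<Rightarrow> ('m \<Rightarrow> 'a \<Rightarrow> 'm) \<Rightarrow> 'm \<Rightarrow> 'm \<Rightarrow> 'm set \<Rightarrow> bool" where
  "walk Sig rho m m' V \<longleftrightarrow> (\<exists>z\<in>lists Sig. foldl rho m z = m' \<and> visits rho m z = V)"

lemma start_in_walk: "walk Sig rho m m' V \<Longrightarrow> m \<in> V"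
  unfolding walk_def by auto

lemma walkE:
  assumes "walk Sig rho m m' V"
  obtains z where "z \<in> lists Sig" "foldl rho m z = m'" "visits rho m z = V"
  using assms unfolding walk_def by (elim bexE conjE) simp

lemma walk_Nil: "walk Sig rho m m {m}"
  unfolding walk_def by (intro bexI[of _ "[]"]) simp_all

lemma walk_step: "a \<in> Sig \<Longrightarrow> walk Sig rho m (rho m a) {m, rho m a}"
  unfolding walk_def by (intro bexI[of _ "[a]"]) simp_all

lemma walk_trans:
  "walk Sig rho m1 m3 (V \<union> V')" if V: "walk Sig rho m1 m2 V" and V': "walk Sig rho m2 m3 V'"
proof -
  obtain z where "z \<in> lists Sig" "foldl rho m1 z = m2" "visits rho m1 z = V"
    by (rule walkE[OF V])
  moreover obtain y where "y \<in> lists Sig" "foldl rho m2 y = m3" "visits rho m2 y = V'"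
    by (rule walkE[OF V'])
  ultimately show ?thesis
    unfolding walk_def by (intro bexI[of _ "z @ y"]) (simp_all add: visits_append)
qed

lemma walk_insert_cycle:
  assumes "walk Sig rho m m V" and "m' \<in> V" and "walk Sig rho m' m' W"
  shows "walk Sig rho m m (V \<union> W)"
proof -
  obtain z where z: "z \<in> lists Sig" "foldl rho m z = m" "visits rho m z = V"
    by (rule walkE[OF assms(1)])
  obtain y where y: "y \<in> lists Sig" "foldl rho m' y = m'" "visits rho m' y = W"
    by (rule walkE[OF assms(3)])
  obtain z1 z2 where z12: "z = z1 @ z2" "foldl rho m z1 = m'"
    using visits_split[of m' rho m z] assms(2) z(3) by auto
  have "visits rho m (z1 @ y @ z2) = V \<union> W"
    using z(3) y(2,3) z12 by (auto simp: visits_append)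
  moreover have "foldl rho m (z1 @ y @ z2) = m"
    using z(2) y(2) z12 by simp
  moreover have "z1 @ y @ z2 \<in> lists Sig"
    using z(1) y(1) z12(1) by simp
  ultimately show ?thesis
    unfolding walk_def by blast
qed

lemma walk_chain:
  assumes "\<forall>k<n. walk Sig rho (P k) (P (Suc k)) (V k)"
  shows "walk Sig rho (P 0) (P n) (insert (P 0) (\<Union>k<n. V k))"
  using assms
proof (induction n)
  case (Suc n)
  then have "walk Sig rho (P 0) (P (Suc n)) (insert (P 0) (\<Union>k<n. V k) \<union> V n)"
    by (intro walk_trans) auto
  then show ?case
    by (simp add: lessThan_Suc Un_commute)
qed (simp add: walk_Nil)

lemma walk_cycles_UN:
  assumes "finite J" and "\<forall>j\<in>J. walk Sig rho m m (V j)"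
  shows "walk Sig rho m m (insert m (\<Union>j\<in>J. V j))"
  using assms
proof (induction J rule: finite_induct)
  case (insert j J)
  then have "walk Sig rho m m (insert m (\<Union>j\<in>J. V j) \<union> V j)"
    by (intro walk_trans) auto
  then show ?case
    by (simp add: Un_commute)
qed (simp add: walk_Nil)

lemma walk_rounds:
  fixes K :: nat
  assumes "\<forall>k<n. \<forall>l. walk Sig rho (P k) (P (Suc k)) (V k l)" and "P n = P 0"
  shows "walk Sig rho (P 0) (P 0) (insert (P 0) (\<Union>l<K. \<Union>k<n. V k l))"
proof -
  have "\<forall>l\<in>{..<K}. walk Sig rho (P 0) (P 0) (insert (P 0) (\<Union>k<n. V k l))"
    using walk_chain[of n Sig rho P] assms by auto
  from walk_cycles_UN[OF _ this] show ?thesis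
    by (cases "K = 0") (simp_all add: walk_Nil lessThan_empty_iff)
qed

lemma UN_nth_mod:
  assumes "xs \<noteq> []" and "length xs \<le> N"
  shows "(\<Union>l<N. xs ! (l mod length xs)) = \<Union>(set xs)"
proof
  have "xs ! (l mod length xs) \<in> set xs" for l
    using assms(1) by simp
  then show "(\<Union>l<N. xs ! (l mod length xs)) \<subseteq> \<Union>(set xs)"
    by blast
  show "\<Union>(set xs) \<subseteq> (\<Union>l<N. xs ! (l mod length xs))"
  proof
    fix x assume "x \<in> \<Union>(set xs)"
    then obtain j where j: "j < length xs" "x \<in> xs ! j"
      by (auto simp: in_set_conv_nth)
    with assms(2) have "j < N" "xs ! (j mod length xs) = xs ! j"
      by simp_all
    with j(2) show "x \<in> (\<Union>l<N. xs ! (l mod length xs))"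
      by blast
  qed
qed

lemma UN_nth_mod_rounds:
  fixes L N :: nat
  assumes "\<And>k. k \<le> L \<Longrightarrow> Vs k \<noteq> [] \<and> length (Vs k) \<le> N"
  shows "(\<Union>l<N. \<Union>k\<le>L. Vs k ! (l mod length (Vs k)) \<union> B k) = (\<Union>k\<le>L. \<Union>(set (Vs k)) \<union> B k)"
proof -
  have "0 < N"
    using assms[of 0] by (cases N) auto
  then have "(\<Union>l<N. Vs k ! (l mod length (Vs k)) \<union> B k) = \<Union>(set (Vs k)) \<union> B k" if "k \<le> L" for k
    using UN_nth_mod[of "Vs k" N] assms[OF that] by (simp add: UN_Un_distrib lessThan_empty_iff)
  then show ?thesis
    by (subst SUP_commute) simp
qed

lemma walk_through_joins:
  assumes joins: "\<And>k. k \<le> L \<Longrightarrow> Vs k \<noteq> [] \<and> (\<forall>V\<in>set (Vs k). walk Sig rho (enter k) (leave k) V)"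
    and steps: "\<And>k. k < L \<Longrightarrow> \<exists>a\<in>Sig. enter (Suc k) = rho (leave k) a"
    and closed: "leave L = enter (Suc L)" "enter (Suc L) = enter 0"
  shows "walk Sig rho (enter 0) (enter 0)
    (insert (enter 0) ((\<Union>k\<le>L. \<Union>(set (Vs k))) \<union> leave ` {..L} \<union> enter ` Suc ` {..L}))"
proof -
  define N where "N = (\<Sum>k\<le>L. length (Vs k))"
  \<comment> \<open>Round l takes the (l mod length (Vs k))-th walk at join k, so N rounds use every walk.\<close>
  define Op where "Op k l = Vs k ! (l mod length (Vs k)) \<union> {leave k, enter (Suc k)}" for k l
  have "walk Sig rho (enter k) (enter (Suc k)) (Op k l)" if "k \<le> L" for k l
  proof -
    have step: "walk Sig rho (leave k) (enter (Suc k)) {leave k, enter (Suc k)}"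
    proof (cases "k < L")
      case True
      then show ?thesis
        using steps walk_step by metis
    next
      case False
      with that show ?thesis
        using closed(1) walk_Nil by (metis insert_absorb2 le_neq_implies_less)
    qed
    have "walk Sig rho (enter k) (leave k) (Vs k ! (l mod length (Vs k)))"
      using joins[OF that] by simp
    from walk_trans[OF this step] show ?thesis
      unfolding Op_def .
  qed
  then have "walk Sig rho (enter 0) (enter 0) (insert (enter 0) (\<Union>l<N. \<Union>k<Suc L. Op k l))"
    using walk_rounds[of "Suc L" Sig rho enter Op N] closed(2) by simp
  moreover have "(\<Union>l<N. \<Union>k<Suc L. Op k l) = (\<Union>k\<le>L. \<Union>(set (Vs k)) \<union> {leave k, enter (Suc k)})"
    unfolding Op_def lessThan_Suc_atMost
    using joins by (intro UN_nth_mod_rounds) (auto simp: N_def intro!: member_le_sum)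
  moreover have "(\<Union>k\<le>L. \<Union>(set (Vs k)) \<union> {leave k, enter (Suc k)}) =
      (\<Union>k\<le>L. \<Union>(set (Vs k))) \<union> leave ` {..L} \<union> enter ` Suc ` {..L}"
    by auto
  ultimately show ?thesis
    by simp
qed

lemma walk_of_steps:
  "ps \<noteq> [] \<Longrightarrow> \<forall>i. Suc i < length ps \<longrightarrow> (\<exists>a\<in>Sig. ps ! Suc i = rho (ps ! i) a) \<Longrightarrow>
   walk Sig rho (hd ps) (last ps) (set ps)"
proof (induction ps rule: induct_list012)
  case (3 x y zs)
  obtain a where a: "a \<in> Sig" "y = rho x a"
    using "3.prems"(2)[rule_format, of 0] by auto
  have "\<forall>i. Suc i < length (y # zs) \<longrightarrow> (\<exists>a\<in>Sig. (y # zs) ! Suc i = rho ((y # zs) ! i) a)"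
    using "3.prems"(2) by (metis Suc_less_eq length_Cons nth_Cons_Suc)
  then have "walk Sig rho y (last (y # zs)) (set (y # zs))"
    using "3.IH"(2) by auto
  with walk_step[OF a(1), of rho x] have "walk Sig rho x (last (y # zs)) ({x, y} \<union> set (y # zs))"
    using a(2) walk_trans by metis
  moreover have "{x, y} \<union> set (y # zs) = set (x # y # zs)"
    by auto
  ultimately show ?case
    by simp
qed (simp_all add: walk_Nil)

lemma walk_of_mpath: "ps \<in> mpaths Sig M rho m m' \<Longrightarrow> walk Sig rho m m' (set ps)"
  unfolding mpaths_def using walk_of_steps by blast

section \<open>Infinitely often visited states\<close>

lemma inf_states_eq_limit: "inf_states = limit"
  by (simp add: fun_eq_iff inf_states_def limit_def)

lemma inf_states_comp:
  assumes "finite (range s)"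
  shows "inf_states (\<lambda>i. f (s i)) = f ` inf_states s"
proof -
  obtain k where k: "limit s = range (suffix k s)"
    using limit_is_suffix[OF assms] by blast
  have "limit (f \<circ> s) \<subseteq> range (suffix k (f \<circ> s))"
    by (rule limit_in_range_suffix)
  also have "\<dots> = f ` limit s"
    unfolding k by (auto simp: suffix_def)
  finally show ?thesis
    unfolding inf_states_eq_limit comp_def[symmetric] by auto
qed

lemma inf_states_cycle:
  assumes fin: "finite (range s)" and q: "q \<in> inf_states s"
  obtains j1 j2 where "j1 < j2" "s j1 = q" "s j2 = q" "s ` {j1..j2} = inf_states s"
proof -
  obtain k where k: "inf_states s = range (suffix k s)"
    using limit_is_suffix[OF fin] unfolding inf_states_eq_limit by blast
  have frequent: "\<exists>\<^sub>\<infinity>i. s i = v" if "v \<in> inf_states s" for v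
    using that by (simp add: inf_states_def)
  obtain j1 where j1: "k \<le> j1" "s j1 = q"
    using frequent[OF q] by (auto simp: INFM_nat_le)
  have "\<forall>v\<in>inf_states s. \<exists>j. j1 < j \<and> s j = v"
    using frequent by (auto simp: INFM_nat)
  then obtain occ where occ: "\<forall>v\<in>inf_states s. j1 < occ v \<and> s (occ v) = v"
    by metis
  have "finite (inf_states s)"
    using fin k by (metis limit_in_range finite_subset inf_states_eq_limit)
  then have bound: "occ v \<le> Max (occ ` inf_states s)" if "v \<in> inf_states s" for v
    using that by simp
  obtain j2 where j2: "Max (occ ` inf_states s) + j1 < j2" "s j2 = q"
    using frequent[OF q] by (auto simp: INFM_nat)
  have "s ` {j1..j2} = inf_states s"
  proof
    show "s ` {j1..j2} \<subseteq> inf_states s"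
    proof
      fix v assume "v \<in> s ` {j1..j2}"
      then obtain i where "j1 \<le> i" "v = s i"
        by auto
      then have "v = suffix k s (i - k)"
        using j1(1) by (simp add: suffix_def)
      then show "v \<in> inf_states s"
        unfolding k by simp
    qed
    show "inf_states s \<subseteq> s ` {j1..j2}"
    proof
      fix v assume v: "v \<in> inf_states s"
      then have "occ v \<in> {j1..j2}"
        using occ bound[OF v] j2(1) by auto
      then show "v \<in> s ` {j1..j2}"
        using occ v by (metis imageI)
    qed
  qed
  moreover have "j1 < j2"
    using j2(1) by simp
  ultimately show ?thesis
    using that j1(2) j2(2) by blast
qed

lemma inf_states_blocks:
  assumes b: "strict_mono (b :: nat \<Rightarrow> nat)" and V: "\<And>n. f ` {b n..b (Suc n)} = V"
  shows "inf_states f = V"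
proof
  show "inf_states f \<subseteq> V"
  proof
    fix q assume "q \<in> inf_states f"
    then obtain i where i: "b 0 < i" "f i = q"
      by (auto simp: inf_states_def INFM_nat)
    have "i < b (Suc i)"
      using strict_mono_imp_increasing[OF b, of "Suc i"] by simp
    then obtain k where "\<forall>j\<le>k. \<not> i < b j" "i < b (k + 1)"
      using ex_least_nat_less[of "\<lambda>k. i < b k"] i by auto
    then have "i \<in> {b k..b (Suc k)}"
      by auto
    then show "q \<in> V"
      using V i by blast
  qed
  show "V \<subseteq> inf_states f"
  proof
    fix q assume q: "q \<in> V"
    have "\<exists>i>n. f i = q" for n
    proof -
      obtain i where i: "i \<in> {b (Suc n)..b (Suc (Suc n))}" "f i = q"
        using V[of "Suc n"] q by (metis imageE)
      moreover have "Suc n \<le> b (Suc n)"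
        using strict_mono_imp_increasing[OF b] by blast
      ultimately show ?thesis
        by (intro exI[of _ i]) auto
    qed
    then show "q \<in> inf_states f"
      by (simp add: inf_states_def INFM_nat)
  qed
qed

lemma memory_run_loop:
  assumes w: "w \<in> words Sig" and fin: "finite (range (memory_run rho m0 w))"
    and m: "m \<in> inf_states (memory_run rho m0 w)"
  obtains u x where "u \<in> lists Sig" "foldl rho m0 u = m" "x \<in> lists Sig" "x \<noteq> []"
    "foldl rho m x = m" "visits rho m x = inf_states (memory_run rho m0 w)"
proof -
  obtain j1 j2 where j: "j1 < j2" "memory_run rho m0 w j1 = m" "memory_run rho m0 w j2 = m"
    "memory_run rho m0 w ` {j1..j2} = inf_states (memory_run rho m0 w)"
    using inf_states_cycle[OF fin m] by blast
  define x where "x = map w [j1..<j1 + (j2 - j1)]"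
  have "pref w j1 \<in> lists Sig" "x \<in> lists Sig"
    using w by (auto simp: pref_in_lists x_def words_def)
  moreover have "foldl rho m0 (pref w j1) = m" "x \<noteq> []"
    using j(1,2) by (simp_all add: memory_run_def x_def)
  moreover have "foldl rho m x = m"
    using memory_run_add[of rho m0 w j1 "j2 - j1"] j by (simp add: x_def)
  moreover have "visits rho m x = inf_states (memory_run rho m0 w)"
    using visits_memory_run[of rho m0 w j1 "j2 - j1"] j by (simp add: x_def)
  ultimately show ?thesis
    using that by blast
qed

section \<open>Words as limits of growing prefixes\<close>

definition lim_word :: "(nat \<Rightarrow> 'a list) \<Rightarrow> nat \<Rightarrow> 'a" where
  "lim_word P i = P (Suc i) ! i"

context
  fixes P S :: "nat \<Rightarrow> 'a list"
  assumes P_Suc: "\<And>n. P (Suc n) = P n @ S n" and S_nonempty: "\<And>n. S n \<noteq> []"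
begin

lemma length_blocks_ge: "n \<le> length (P n)"
proof (induction n)
  case (Suc n)
  have "0 < length (S n)"
    using S_nonempty[of n] by simp
  moreover have "length (P (Suc n)) = length (P n) + length (S n)"
    by (simp add: P_Suc)
  ultimately show ?case
    using Suc.IH by linarith
qed simp

lemma take_blocks: "take (length (P n)) (P (n + d)) = P n"
proof (induction d)
  case (Suc d)
  have "length (P n) \<le> length (P (n + d))"
    using Suc.IH by (metis length_take min.absorb_iff2 nat_le_linear)
  with Suc.IH show ?case
    by (simp add: P_Suc)
qed simp

lemma pref_lim_word: "pref (lim_word P) (length (P n)) = P n"
proof (rule nth_equalityI)
  fix i assume "i < length (pref (lim_word P) (length (P n)))"
  then have i: "i < length (P n)"
    by (simp add: pref_def)
  have "i < length (P (Suc i))"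
    using length_blocks_ge[of "Suc i"] by simp
  then have "P (Suc i) ! i = P (n + Suc i) ! i"
    using take_blocks[of "Suc i" n] by (metis add.commute nth_take)
  also have "\<dots> = P n ! i"
    using take_blocks[of n "Suc i"] i by (metis nth_take)
  finally show "pref (lim_word P) (length (P n)) ! i = P n ! i"
    using i by (simp add: pref_def lim_word_def)
qed (simp add: pref_def)

lemma pref_lim_word_take: "i \<le> length (P n) \<Longrightarrow> pref (lim_word P) i = take i (P n)"
  using pref_take pref_lim_word by metis

lemma lim_word_in_words:
  assumes "\<And>n. P n \<in> lists Sig"
  shows "lim_word P \<in> words Sig"
proof -
  have "lim_word P i \<in> set (P (Suc i))" for i
    using length_blocks_ge[of "Suc i"] by (simp add: lim_word_def)
  then show ?thesis
    using assms by (auto simp: words_def)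
qed

lemma inf_states_strategy_lim_word:
  assumes "\<And>n. foldl rho m0 (P n) = m" and "\<And>n. visits rho m (S n) = V"
  shows "inf_states (\<lambda>i. strat_of m0 rho tau (pref (lim_word P) i)) = tau ` V"
proof -
  define b where "b n = length (P n)" for n
  have b_Suc: "b (Suc n) = b n + length (S n)" for n
    by (simp add: b_def P_Suc)
  have "strict_mono b"
    using S_nonempty by (simp add: strict_mono_Suc_iff b_Suc)
  moreover have "(\<lambda>i. tau (memory_run rho m0 (lim_word P) i)) ` {b n..b (Suc n)} = tau ` V" for n
  proof -
    have "P n @ S n = P n @ map (lim_word P) [b n..<b n + length (S n)]"
      using pref_lim_word[of "Suc n"] pref_lim_word[of n] pref_add[of "lim_word P" "b n" "length (S n)"]
      by (simp add: b_def P_Suc)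
    then have "visits rho (memory_run rho m0 (lim_word P) (b n)) (S n) =
        memory_run rho m0 (lim_word P) ` {b n..b (Suc n)}"
      using visits_memory_run[of rho m0 "lim_word P" "b n" "length (S n)"] by (simp add: b_Suc)
    moreover have "memory_run rho m0 (lim_word P) (b n) = m"
      using assms(1) pref_lim_word[of n] by (simp add: memory_run_def b_def)
    ultimately show ?thesis
      using assms(2) by (simp add: image_image[symmetric])
  qed
  ultimately show ?thesis
    unfolding strat_of_pref by (rule inf_states_blocks)
qed

end

section \<open>Rabin acceptance\<close>

lemma rabin_acc_alpha_g:
  "S \<subseteq> M \<Longrightarrow> rabin_acc (alpha_g alpha M tau) S \<longleftrightarrow> rabin_acc alpha (tau ` S)"
  unfolding rabin_acc_def alpha_g_def by (auto 0 4)

lemma not_rabin_acc_UN: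
  "\<forall>j\<in>J. \<not> rabin_acc alpha (X j) \<Longrightarrow> \<not> rabin_acc alpha (\<Union>j\<in>J. X j)"
  unfolding rabin_acc_def by blast

lemma not_rabin_acc_Un_absorb:
  assumes "\<not> rabin_acc alpha S" and "\<forall>j\<in>J. X j \<subseteq> S \<or> \<not> rabin_acc alpha (X j)"
  shows "\<not> rabin_acc alpha (S \<union> (\<Union>j\<in>J. X j))"
proof
  assume "rabin_acc alpha (S \<union> (\<Union>j\<in>J. X j))"
  then obtain E F where EF: "(E, F) \<in> alpha" "(S \<union> (\<Union>j\<in>J. X j)) \<inter> E = {}"
      "(S \<union> (\<Union>j\<in>J. X j)) \<inter> F \<noteq> {}"
    unfolding rabin_acc_def by blast
  have "S \<inter> F = {}"
    using assms(1) EF(1,2) unfolding rabin_acc_def by blast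
  with EF(3) obtain j where j: "j \<in> J" "X j \<inter> F \<noteq> {}" "\<not> X j \<subseteq> S"
    by blast
  then have "\<not> rabin_acc alpha (X j)"
    using assms(2) by blast
  moreover have "X j \<inter> E = {}"
    using EF(2) j(1) by blast
  ultimately show False
    using EF(1) j(2) unfolding rabin_acc_def by blast
qed

lemma rejecting_cycles_extend_loop:
  assumes "walk Sig rho m m I" and "m \<in> I" and "finite I"
    and cycles: "\<forall>i\<in>I. \<exists>T. walk Sig rho i i T \<and> \<not> rabin_acc alpha (tau ` T)"
  obtains z where "z \<in> lists Sig" "foldl rho m z = m" "\<not> rabin_acc alpha (tau ` (I \<union> visits rho m z))"
proof -
  obtain Tf where Tf: "\<And>i. i \<in> I \<Longrightarrow> walk Sig rho i i (Tf i)"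
      "\<And>i. i \<in> I \<Longrightarrow> \<not> rabin_acc alpha (tau ` Tf i)"
    using cycles by metis
  have I_sub: "I \<subseteq> (\<Union>i\<in>I. Tf i)"
    using start_in_walk[OF Tf(1)] by blast
  have "\<forall>i\<in>I. walk Sig rho m m (I \<union> Tf i)"
    using assms(1) Tf(1) by (intro ballI walk_insert_cycle)
  then have "walk Sig rho m m (insert m (\<Union>i\<in>I. I \<union> Tf i))"
    using assms(3) by (intro walk_cycles_UN)
  moreover have "insert m (\<Union>i\<in>I. I \<union> Tf i) = (\<Union>i\<in>I. Tf i)"
    using assms(2) I_sub by auto
  ultimately obtain z where z: "z \<in> lists Sig" "foldl rho m z = m" "visits rho m z = (\<Union>i\<in>I. Tf i)"
    by (metis walkE)
  moreover have "I \<union> visits rho m z = (\<Union>i\<in>I. Tf i)"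
    using z(3) I_sub by auto
  ultimately show ?thesis
    using that Tf(2) by (simp add: image_UN not_rabin_acc_UN)
qed

section \<open>Pumping against a good-for-games Buchi automaton\<close>

lemma strategy_accepting_in_lang:
  assumes "gfg_strategy Sig Q0 delta acc g" and "w \<in> words Sig"
    and "acc (inf_states (\<lambda>i. g (pref w i)))"
  shows "w \<in> lang Sig Q0 delta acc"
  using assms unfolding gfg_strategy_def lang_def by blast

lemma gfg_buchi_hits_accepting_in_loop_power:
  assumes gA: "gfg_strategy Sig Q0 delta (rabin_acc alpha) (strat_of m0 rho tau)"
    and gB: "gfg_strategy Sig Q0B deltaB (buchi_acc alphaB) gB"
    and L: "lang Sig Q0B deltaB (buchi_acc alphaB) = lang Sig Q0 delta (rabin_acc alpha)"
    and p: "p \<in> lists Sig" "foldl rho m0 p = m"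
    and x: "x \<in> lists Sig" "x \<noteq> []" "foldl rho m x = m"
    and acc: "rabin_acc alpha (tau ` visits rho m x)"
  shows "\<exists>k i. length p < i \<and> i \<le> length (p @ concat (replicate k x)) \<and>
           gB (take i (p @ concat (replicate k x))) \<in> alphaB"
proof -
  define P where "P n = p @ concat (replicate n x)" for n
  have P_Suc: "P (Suc n) = P n @ x" for n
    by (simp add: P_def replicate_append_same[symmetric])
  have P: "P n \<in> lists Sig" "foldl rho m0 (P n) = m" for n
    using p x by (auto simp: P_def foldl_power_loop)
  define W where "W = lim_word P"
  have W: "W \<in> words Sig"
    unfolding W_def using P_Suc x(2) P(1) by (rule lim_word_in_words[where P = P])
  have "inf_states (\<lambda>i. strat_of m0 rho tau (pref W i)) = tau ` visits rho m x"
    unfolding W_def using P_Suc x(2) P(2)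
    by (rule inf_states_strategy_lim_word[where P = P]) simp
  then have "W \<in> lang Sig Q0B deltaB (buchi_acc alphaB)"
    using strategy_accepting_in_lang[OF gA W] acc L by simp
  then have "buchi_acc alphaB (inf_states (\<lambda>i. gB (pref W i)))"
    using gB W unfolding gfg_strategy_def by blast
  then obtain i where i: "length p < i" "gB (pref W i) \<in> alphaB"
    unfolding buchi_acc_def inf_states_def by (auto simp: INFM_nat)
  have "i \<le> length (P i)"
    using P_Suc x(2) by (rule length_blocks_ge[where P = P])
  moreover from this have "pref W i = take i (P i)"
    unfolding W_def by (rule pref_lim_word_take[where P = P, OF P_Suc x(2)])
  ultimately show ?thesis
    using i unfolding P_def by metis
qed

lemma pumped_word_with_buchi_visits:
  assumes gA: "gfg_strategy Sig Q0 delta (rabin_acc alpha) (strat_of m0 rho tau)"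
    and gB: "gfg_strategy Sig Q0B deltaB (buchi_acc alphaB) gB"
    and L: "lang Sig Q0B deltaB (buchi_acc alphaB) = lang Sig Q0 delta (rabin_acc alpha)"
    and u: "u \<in> lists Sig" "foldl rho m0 u = m"
    and x: "x \<in> lists Sig" "x \<noteq> []" "foldl rho m x = m"
    and z: "z \<in> lists Sig" "foldl rho m z = m"
    and acc: "rabin_acc alpha (tau ` visits rho m x)"
  obtains W where "W \<in> words Sig" "\<exists>\<^sub>\<infinity>i. gB (pref W i) \<in> alphaB"
    "inf_states (\<lambda>i. strat_of m0 rho tau (pref W i)) = tau ` (visits rho m x \<union> visits rho m z)"
proof -
  obtain kf where kf: "\<And>p. p \<in> lists Sig \<Longrightarrow> foldl rho m0 p = m \<Longrightarrow>
      \<exists>i. length p < i \<and> i \<le> length (p @ concat (replicate (kf p) x)) \<and>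
        gB (take i (p @ concat (replicate (kf p) x))) \<in> alphaB"
    using gfg_buchi_hits_accepting_in_loop_power[OF gA gB L _ _ x acc] by metis
  \<comment> \<open>The extra copy of x makes the visited memories of a block independent of kf p.\<close>
  define block where "block p = concat (replicate (kf p) x) @ x @ z" for p
  have block: "block p \<noteq> []" "block p \<in> lists Sig" "foldl rho m (block p) = m"
      "visits rho m (block p) = visits rho m x \<union> visits rho m z" for p
    using x z visits_power_loop[OF x(3), of "kf p"]
    by (auto simp: block_def visits_append foldl_power_loop)
  define P where "P = rec_nat u (\<lambda>_ p. p @ block p)"
  have P_Suc: "P (Suc n) = P n @ block (P n)" for n
    by (simp add: P_def)
  have nonempty: "block (P n) \<noteq> []" for n
    by (rule block(1))
  have P: "P n \<in> lists Sig \<and> foldl rho m0 (P n) = m" for n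
    by (induction n) (simp_all add: P_def u block)
  have "\<exists>i>n. gB (pref (lim_word P) i) \<in> alphaB" for n
  proof -
    define X where "X = P n @ concat (replicate (kf (P n)) x)"
    obtain i where i: "length (P n) < i" "i \<le> length X" "gB (take i X) \<in> alphaB"
      using kf P unfolding X_def by blast
    have "P (Suc n) = X @ x @ z"
      by (simp add: P_Suc X_def block_def)
    with i(2) have "pref (lim_word P) i = take i X"
      using pref_lim_word_take[where P = P, OF P_Suc nonempty, of i "Suc n"] by simp
    moreover have "n < i"
      using length_blocks_ge[where P = P, OF P_Suc nonempty, of n] i(1) by simp
    ultimately show ?thesis
      using i(3) by auto
  qed
  moreover have "inf_states (\<lambda>i. strat_of m0 rho tau (pref (lim_word P) i)) =
      tau ` (visits rho m x \<union> visits rho m z)"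
    using P block(4) by (intro inf_states_strategy_lim_word[where P = P, OF P_Suc nonempty]) auto
  moreover have "lim_word P \<in> words Sig"
    using P by (intro lim_word_in_words[where P = P, OF P_Suc nonempty]) blast
  ultimately show ?thesis
    using that unfolding INFM_nat by blast
qed

lemma no_rejecting_extension_of_accepting_loop:
  assumes gA: "gfg_strategy Sig Q0 delta (rabin_acc alpha) (strat_of m0 rho tau)"
    and gB: "gfg_strategy Sig Q0B deltaB (buchi_acc alphaB) gB" and "finite alphaB"
    and L: "lang Sig Q0B deltaB (buchi_acc alphaB) = lang Sig Q0 delta (rabin_acc alpha)"
    and u: "u \<in> lists Sig" "foldl rho m0 u = m"
    and x: "x \<in> lists Sig" "x \<noteq> []" "foldl rho m x = m"
    and z: "z \<in> lists Sig" "foldl rho m z = m"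
    and acc: "rabin_acc alpha (tau ` visits rho m x)"
    and rej: "\<not> rabin_acc alpha (tau ` (visits rho m x \<union> visits rho m z))"
  shows False
proof -
  obtain W where W: "W \<in> words Sig" "\<exists>\<^sub>\<infinity>i. gB (pref W i) \<in> alphaB"
    "inf_states (\<lambda>i. strat_of m0 rho tau (pref W i)) = tau ` (visits rho m x \<union> visits rho m z)"
    using pumped_word_with_buchi_visits[OF gA gB L u x z acc] .
  from W(2) have "buchi_acc alphaB (inf_states (\<lambda>i. gB (pref W i)))"
    using fin_ex_inf_eq_limit[OF \<open>finite alphaB\<close>]
    by (simp add: buchi_acc_def inf_states_eq_limit Int_commute)
  then have "W \<in> lang Sig Q0 delta (rabin_acc alpha)"
    using strategy_accepting_in_lang[OF gB W(1)] L by simp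
  then have "rabin_acc alpha (inf_states (\<lambda>i. strat_of m0 rho tau (pref W i)))"
    using gA W(1) unfolding gfg_strategy_def by blast
  with W(3) rej show False
    by simp
qed

section \<open>Tight strategies\<close>

lemma run_in_states:
  assumes "aut_wf Sig Q Q0 delta" and "w \<in> words Sig" and "is_run Q0 delta w r"
  shows "r n \<in> Q"
proof (induction n)
  case 0
  then show ?case
    using assms unfolding aut_wf_def is_run_def by auto
next
  case (Suc n)
  then show ?case
    using assms unfolding aut_wf_def is_run_def words_def by blast
qed

lemma nonreplaceable_rejecting_walks:
  assumes "finite M" and "tau a = tau b" and "\<not> replaceable Sig alpha M rho tau b a"
  shows "\<exists>Vs. Vs \<noteq> [] \<and> (\<forall>V\<in>set Vs. walk Sig rho a b V) \<and>
    (tau ` \<Union>(set Vs) \<subseteq> {tau a} \<or> \<not> rabin_acc alpha (tau ` \<Union>(set Vs)))"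
proof (cases "a = b")
  case True
  then show ?thesis
    by (intro exI[of _ "[{a}]"]) (simp add: walk_Nil)
next
  case False
  then obtain S where S: "S \<in> combinations (mpaths Sig M rho a b)"
      "\<not> rabin_acc (alpha_g alpha M tau) S"
    using assms(2,3) unfolding replaceable_def by auto
  then obtain P where P: "P \<subseteq> mpaths Sig M rho a b" "P \<noteq> {}" "S = \<Union>(set ` P)"
    unfolding combinations_def by blast
  have "S \<subseteq> M"
    using P(1,3) unfolding mpaths_def by auto
  then have "finite S"
    using assms(1) by (rule finite_subset)
  then obtain \<F> where \<F>: "finite \<F>" "\<F> \<subseteq> set ` P" "S \<subseteq> \<Union>\<F>"
    using finite_subset_Union P(3) by (metis subset_refl)
  obtain ps0 where "ps0 \<in> P"
    using P(2) by blast
  obtain Vs where Vs: "set Vs = insert (set ps0) \<F>"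
    using finite_list \<F>(1) by (metis finite_insert)
  have "set ps0 \<subseteq> S" "\<Union>\<F> \<subseteq> S"
    using \<open>ps0 \<in> P\<close> \<F>(2) P(3) by auto
  then have "\<Union>(set Vs) = S"
    using Vs \<F>(3) by auto
  moreover have "walk Sig rho a b V" if "V \<in> set Vs" for V
  proof -
    have "V \<in> set ` P"
      using that Vs \<F>(2) \<open>ps0 \<in> P\<close> by blast
    then obtain ps where "ps \<in> mpaths Sig M rho a b" "V = set ps"
      using P(1) by blast
    then show ?thesis
      by (simp add: walk_of_mpath)
  qed
  moreover have "\<not> rabin_acc alpha (tau ` S)"
    using S(2) rabin_acc_alpha_g[OF \<open>S \<subseteq> M\<close>, of alpha tau] by simp
  moreover have "Vs \<noteq> []"
    using Vs by auto
  ultimately show ?thesis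
    by blast
qed

definition good_states :: "'a set \<Rightarrow> 'q set \<Rightarrow> 'q set \<Rightarrow> ('q \<Rightarrow> 'a \<Rightarrow> 'q set) \<Rightarrow> ('q set \<Rightarrow> bool) \<Rightarrow> 'q set" where
  "good_states Sig Q Q0 delta acc = {q \<in> Q. \<forall>w\<in>words Sig. \<forall>r.
     is_run Q0 delta w r \<and> q \<in> inf_states r \<longrightarrow> w \<in> lang Sig Q0 delta acc}"

lemma lang_buchi_good_states_subset:
  "lang Sig Q0 delta (buchi_acc (good_states Sig Q Q0 delta acc)) \<subseteq> lang Sig Q0 delta acc"
proof
  fix w assume "w \<in> lang Sig Q0 delta (buchi_acc (good_states Sig Q Q0 delta acc))"
  then obtain r q where "w \<in> words Sig" "is_run Q0 delta w r" "q \<in> inf_states r"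
      "q \<in> good_states Sig Q Q0 delta acc"
    unfolding lang_def buchi_acc_def by blast
  then show "w \<in> lang Sig Q0 delta acc"
    unfolding good_states_def by blast
qed

locale tight_transducer =
  fixes Sig :: "'a set" and Q Q0 :: "'q set" and delta :: "'q \<Rightarrow> 'a \<Rightarrow> 'q set"
    and alpha :: "('q set \<times> 'q set) set"
    and M :: "'m set" and m0 :: 'm and rho :: "'m \<Rightarrow> 'a \<Rightarrow> 'm" and tau :: "'m \<Rightarrow> 'q"
  assumes aut_wf: "aut_wf Sig Q Q0 delta"
    and transducer: "transducer Sig Q M m0 rho tau"
    and gfg: "gfg_strategy Sig Q0 delta (rabin_acc alpha) (strat_of m0 rho tau)"
    and uses_transitions: "\<forall>q\<in>Q. \<forall>a\<in>Sig. \<forall>q'\<in>delta q a. \<exists>u\<in>lists Sig.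
          strat_of m0 rho tau u = q \<and> strat_of m0 rho tau (u @ [a]) = q'"
    and no_replaceable: "\<forall>m\<in>M. \<forall>m'\<in>M. \<not> replaceable Sig alpha M rho tau m m'"
begin

lemma memories: "finite M" "m0 \<in> M" "\<forall>m\<in>M. \<forall>a\<in>Sig. rho m a \<in> M" "\<forall>m\<in>M. tau m \<in> Q"
  using transducer unfolding transducer_def by auto

lemma transition_memory:
  assumes "q \<in> Q" "a \<in> Sig" "q' \<in> delta q a"
  shows "\<exists>m\<in>M. tau m = q \<and> tau (rho m a) = q'"
proof -
  obtain u where "u \<in> lists Sig" "strat_of m0 rho tau u = q" "strat_of m0 rho tau (u @ [a]) = q'"
    using uses_transitions assms by blast
  then show ?thesis
    using foldl_in_closed[OF memories(3,2)] by (intro bexI[of _ "foldl rho m0 u"]) (auto simp: strat_of_def)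
qed

lemma cycle_memories:
  assumes i: "i \<in> M"
    and steps: "\<forall>k<L. s k \<in> Q \<and> b k \<in> Sig \<and> s (Suc k) \<in> delta (s k) (b k)"
    and ends: "s 0 = tau i" "s L = tau i"
  obtains enter leave where
    "\<And>k. k \<le> L \<Longrightarrow> enter k \<in> M \<and> leave k \<in> M \<and> tau (enter k) = s k \<and> tau (leave k) = s k"
    "\<And>k. k < L \<Longrightarrow> \<exists>a\<in>Sig. enter (Suc k) = rho (leave k) a"
    "enter 0 = i" "leave L = i" "enter (Suc L) = i"
proof -
  have "\<forall>k. \<exists>m. k < L \<longrightarrow> m \<in> M \<and> tau m = s k \<and> tau (rho m (b k)) = s (Suc k)"
    using transition_memory steps by blast
  then obtain mk where mk: "\<And>k. k < L \<Longrightarrow> mk k \<in> M \<and> tau (mk k) = s k \<and> tau (rho (mk k) (b k)) = s (Suc k)"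
    by metis
  \<comment> \<open>g takes the k-th transition from memory leave k to enter (Suc k); the memories enter k
    and leave k both carry the state s k but need not coincide.\<close>
  define enter where "enter k = (if k = 0 \<or> L < k then i else rho (mk (k - 1)) (b (k - 1)))" for k
  define leave where "leave k = (if k < L then mk k else i)" for k
  show ?thesis
  proof (rule that)
    show "enter k \<in> M \<and> leave k \<in> M \<and> tau (enter k) = s k \<and> tau (leave k) = s k" if "k \<le> L" for k
      using that i mk[of "k - 1"] mk[of k] memories(3) steps ends by (auto simp: enter_def leave_def)
    show "\<exists>a\<in>Sig. enter (Suc k) = rho (leave k) a" if "k < L" for k
      using that steps by (auto simp: enter_def leave_def)
  qed (simp_all add: enter_def leave_def)
qed

lemma nonreplaceable_joins:
  assumes "\<And>k. k \<le> L \<Longrightarrow> enter k \<in> M \<and> leave k \<in> M \<and> tau (enter k) = tau (leave k)"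
  obtains Vs where
    "\<And>k. k \<le> L \<Longrightarrow> Vs k \<noteq> [] \<and> (\<forall>V\<in>set (Vs k). walk Sig rho (enter k) (leave k) V)"
    "\<And>k. k \<le> L \<Longrightarrow> tau ` \<Union>(set (Vs k)) \<subseteq> {tau (enter k)} \<or> \<not> rabin_acc alpha (tau ` \<Union>(set (Vs k)))"
proof -
  have "\<exists>Vs. k \<le> L \<longrightarrow> Vs \<noteq> [] \<and> (\<forall>V\<in>set Vs. walk Sig rho (enter k) (leave k) V) \<and>
      (tau ` \<Union>(set Vs) \<subseteq> {tau (enter k)} \<or> \<not> rabin_acc alpha (tau ` \<Union>(set Vs)))" for k
  proof (cases "k \<le> L")
    case True
    then have "\<not> replaceable Sig alpha M rho tau (leave k) (enter k)"
      using no_replaceable assms by blast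
    with True show ?thesis
      using nonreplaceable_rejecting_walks[OF memories(1)] assms by metis
  qed simp
  then show ?thesis
    using that by metis
qed

lemma rejecting_cycle_lifts:
  assumes i: "i \<in> M"
    and steps: "\<forall>k<L. s k \<in> Q \<and> b k \<in> Sig \<and> s (Suc k) \<in> delta (s k) (b k)"
    and ends: "s 0 = tau i" "s L = tau i"
    and rej: "\<not> rabin_acc alpha (s ` {0..L})"
  shows "\<exists>T. walk Sig rho i i T \<and> \<not> rabin_acc alpha (tau ` T)"
proof -
  obtain enter leave where memory:
      "\<And>k. k \<le> L \<Longrightarrow> enter k \<in> M \<and> leave k \<in> M \<and> tau (enter k) = s k \<and> tau (leave k) = s k"
    and step: "\<And>k. k < L \<Longrightarrow> \<exists>a\<in>Sig. enter (Suc k) = rho (leave k) a"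
    and closed: "enter 0 = i" "leave L = i" "enter (Suc L) = i"
    using cycle_memories[OF i steps ends] by blast
  obtain Vs where Vs: "\<And>k. k \<le> L \<Longrightarrow> Vs k \<noteq> [] \<and> (\<forall>V\<in>set (Vs k). walk Sig rho (enter k) (leave k) V)"
      "\<And>k. k \<le> L \<Longrightarrow> tau ` \<Union>(set (Vs k)) \<subseteq> {s k} \<or> \<not> rabin_acc alpha (tau ` \<Union>(set (Vs k)))"
    using nonreplaceable_joins[of L enter leave] memory by metis
  define T where "T = insert i ((\<Union>k\<le>L. \<Union>(set (Vs k))) \<union> leave ` {..L} \<union> enter ` Suc ` {..L})"
  have "walk Sig rho i i T"
    using walk_through_joins[of L Vs Sig rho enter leave] Vs(1) step closed unfolding T_def by simp
  moreover have "tau ` T = s ` {0..L} \<union> (\<Union>k\<le>L. tau ` \<Union>(set (Vs k)))"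
  proof -
    have tau_i: "tau i \<in> s ` {0..L}"
      using ends(1) by (metis atLeastAtMost_iff image_eqI le0)
    have "tau ` leave ` {..L} = s ` {0..L}"
      unfolding image_image atMost_atLeast0 using memory by (intro image_cong) simp_all
    moreover have "tau (enter (Suc k)) \<in> s ` {0..L}" if "k \<le> L" for k
      using that memory[of "Suc k"] closed(3) tau_i by (cases "k < L") auto
    ultimately show ?thesis
      unfolding T_def using tau_i by (auto simp: image_Un image_UN)
  qed
  moreover have "\<not> rabin_acc alpha (s ` {0..L} \<union> (\<Union>k\<le>L. tau ` \<Union>(set (Vs k))))"
  proof (rule not_rabin_acc_Un_absorb[OF rej], intro ballI)
    fix k assume "k \<in> {..L}"
    then have "{s k} \<subseteq> s ` {0..L}"
      by simp
    with \<open>k \<in> {..L}\<close> show "tau ` \<Union>(set (Vs k)) \<subseteq> s ` {0..L} \<or> \<not> rabin_acc alpha (tau ` \<Union>(set (Vs k)))"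
      using Vs(2)[of k] by blast
  qed
  ultimately show ?thesis
    by auto
qed

lemma rejecting_run_lifts:
  assumes w: "w \<in> words Sig" and r: "is_run Q0 delta w r"
    and rej: "\<not> rabin_acc alpha (inf_states r)"
    and i: "i \<in> M" "tau i \<in> inf_states r"
  shows "\<exists>T. walk Sig rho i i T \<and> \<not> rabin_acc alpha (tau ` T)"
proof -
  have "range r \<subseteq> Q"
    using run_in_states[OF aut_wf w r] by blast
  then have "finite (range r)"
    using aut_wf finite_subset unfolding aut_wf_def by blast
  then obtain j1 j2 where j: "j1 < j2" "r j1 = tau i" "r j2 = tau i" "r ` {j1..j2} = inf_states r"
    using inf_states_cycle i(2) by metis
  have "(\<lambda>k. r (j1 + k)) ` {0..j2 - j1} = r ` {j1..j2}"
  proof -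
    have "plus j1 ` {0..j2 - j1} = {j1..j2}"
      using j(1) by simp
    then show ?thesis
      by (simp flip: image_image)
  qed
  show ?thesis
  proof (rule rejecting_cycle_lifts[OF i(1), where L = "j2 - j1" and s = "\<lambda>k. r (j1 + k)" and b = "\<lambda>k. w (j1 + k)"])
    show "\<forall>k<j2 - j1. r (j1 + k) \<in> Q \<and> w (j1 + k) \<in> Sig \<and> r (j1 + Suc k) \<in> delta (r (j1 + k)) (w (j1 + k))"
      using run_in_states[OF aut_wf w r] w r unfolding words_def is_run_def by auto
  qed (use j rej \<open>(\<lambda>k. r (j1 + k)) ` {0..j2 - j1} = r ` {j1..j2}\<close> in simp_all)
qed

lemma nongood_memory_rejecting_cycle:
  assumes "i \<in> M" and "tau i \<notin> good_states Sig Q Q0 delta (rabin_acc alpha)"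
  shows "\<exists>T. walk Sig rho i i T \<and> \<not> rabin_acc alpha (tau ` T)"
proof -
  have "tau i \<in> Q"
    using memories(4) assms(1) by blast
  with assms(2) obtain w r where w: "w \<in> words Sig" "is_run Q0 delta w r"
      "tau i \<in> inf_states r" "w \<notin> lang Sig Q0 delta (rabin_acc alpha)"
    unfolding good_states_def by blast
  then have "\<not> rabin_acc alpha (inf_states r)"
    unfolding lang_def by blast
  with w show ?thesis
    using rejecting_run_lifts assms(1) by blast
qed

lemma accepting_strategy_run_visits_good_states:
  assumes gB: "gfg_strategy Sig Q0B deltaB (buchi_acc alphaB) gB" and "finite alphaB"
    and L: "lang Sig Q0B deltaB (buchi_acc alphaB) = lang Sig Q0 delta (rabin_acc alpha)"
    and w: "w \<in> words Sig"
    and acc: "rabin_acc alpha (inf_states (\<lambda>i. strat_of m0 rho tau (pref w i)))"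
  shows "buchi_acc (good_states Sig Q Q0 delta (rabin_acc alpha))
      (inf_states (\<lambda>i. strat_of m0 rho tau (pref w i)))"
proof (rule ccontr)
  define I where "I = inf_states (memory_run rho m0 w)"
  have range_M: "range (memory_run rho m0 w) \<subseteq> M"
    unfolding memory_run_def using foldl_in_closed[OF memories(3,2) pref_in_lists[OF w]] by blast
  then have fin: "finite (range (memory_run rho m0 w))"
    by (rule finite_subset[OF _ memories(1)])
  have "I \<subseteq> M"
    unfolding I_def inf_states_eq_limit using limit_in_range range_M by (rule order.trans)
  have strat_inf: "inf_states (\<lambda>i. strat_of m0 rho tau (pref w i)) = tau ` I"
    unfolding strat_of_pref I_def by (rule inf_states_comp[OF fin])
  obtain m where "m \<in> I"
    using acc strat_inf unfolding rabin_acc_def by blast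
  then obtain u x where u: "u \<in> lists Sig" "foldl rho m0 u = m"
      and x: "x \<in> lists Sig" "x \<noteq> []" "foldl rho m x = m" "visits rho m x = I"
    using memory_run_loop[OF w fin] unfolding I_def by metis
  assume "\<not> buchi_acc (good_states Sig Q Q0 delta (rabin_acc alpha))
      (inf_states (\<lambda>i. strat_of m0 rho tau (pref w i)))"
  then have "\<forall>i\<in>I. \<exists>T. walk Sig rho i i T \<and> \<not> rabin_acc alpha (tau ` T)"
    using nongood_memory_rejecting_cycle \<open>I \<subseteq> M\<close> strat_inf unfolding buchi_acc_def by blast
  moreover have "walk Sig rho m m I"
    unfolding walk_def using x(1,3,4) by (intro bexI[of _ x]) simp_all
  moreover have "finite I"
    using \<open>I \<subseteq> M\<close> memories(1) by (rule finite_subset)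
  ultimately obtain z where z: "z \<in> lists Sig" "foldl rho m z = m"
      and rej: "\<not> rabin_acc alpha (tau ` (I \<union> visits rho m z))"
    using rejecting_cycles_extend_loop \<open>m \<in> I\<close> by metis
  have "rabin_acc alpha (tau ` visits rho m x)"
    using acc strat_inf x(4) by simp
  with rej show False
    using no_rejecting_extension_of_accepting_loop[OF gfg gB \<open>finite alphaB\<close> L u x(1-3) z] x(4) by blast
qed

lemma gfg_buchi_good_states:
  assumes gB: "gfg_strategy Sig Q0B deltaB (buchi_acc alphaB) gB" and "finite alphaB"
    and L: "lang Sig Q0B deltaB (buchi_acc alphaB) = lang Sig Q0 delta (rabin_acc alpha)"
  defines "G \<equiv> good_states Sig Q Q0 delta (rabin_acc alpha)"
  shows "lang Sig Q0 delta (buchi_acc G) = lang Sig Q0 delta (rabin_acc alpha)"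
    and "gfg_strategy Sig Q0 delta (buchi_acc G) (strat_of m0 rho tau)"
proof -
  have run: "is_run Q0 delta w (\<lambda>i. strat_of m0 rho tau (pref w i))" if "w \<in> words Sig" for w
    using gfg that unfolding gfg_strategy_def by blast
  have buchi: "buchi_acc G (inf_states (\<lambda>i. strat_of m0 rho tau (pref w i)))"
    if "w \<in> words Sig" "w \<in> lang Sig Q0 delta (rabin_acc alpha)" for w
  proof -
    have "rabin_acc alpha (inf_states (\<lambda>i. strat_of m0 rho tau (pref w i)))"
      using gfg that unfolding gfg_strategy_def by blast
    then show ?thesis
      unfolding G_def by (rule accepting_strategy_run_visits_good_states[OF gB \<open>finite alphaB\<close> L that(1)])
  qed
  show lang_eq: "lang Sig Q0 delta (buchi_acc G) = lang Sig Q0 delta (rabin_acc alpha)"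
  proof
    show "lang Sig Q0 delta (buchi_acc G) \<subseteq> lang Sig Q0 delta (rabin_acc alpha)"
      unfolding G_def by (rule lang_buchi_good_states_subset)
    show "lang Sig Q0 delta (rabin_acc alpha) \<subseteq> lang Sig Q0 delta (buchi_acc G)"
    proof
      fix w assume w: "w \<in> lang Sig Q0 delta (rabin_acc alpha)"
      then have "w \<in> words Sig"
        unfolding lang_def by blast
      with run buchi w show "w \<in> lang Sig Q0 delta (buchi_acc G)"
        unfolding lang_def[of _ _ _ "buchi_acc G"] by blast
    qed
  qed
  show "gfg_strategy Sig Q0 delta (buchi_acc G) (strat_of m0 rho tau)"
    unfolding gfg_strategy_def lang_eq
  proof (intro ballI conjI impI)
    fix w assume "w \<in> words Sig"
    then show "is_run Q0 delta w (\<lambda>i. strat_of m0 rho tau (pref w i))"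
      by (rule run)
    assume "w \<in> lang Sig Q0 delta (rabin_acc alpha)"
    with \<open>w \<in> words Sig\<close> show "buchi_acc G (inf_states (\<lambda>i. strat_of m0 rho tau (pref w i)))"
      by (rule buchi)
  qed
qed

end

lemma tight_transducer_of_tight:
  assumes "nrw_wf Sig Q Q0 delta alpha" and "tight Sig Q Q0 delta alpha"
  obtains M :: "nat set" and m0 rho tau where "tight_transducer Sig Q Q0 delta alpha M m0 rho tau"
proof -
  from assms(2) obtain M :: "nat set" and m0 rho tau where "transducer Sig Q M m0 rho tau"
    "gfg_strategy Sig Q0 delta (rabin_acc alpha) (strat_of m0 rho tau)"
    "\<forall>q\<in>Q. \<forall>a\<in>Sig. \<forall>q'\<in>delta q a. \<exists>u\<in>lists Sig.
       strat_of m0 rho tau u = q \<and> strat_of m0 rho tau (u @ [a]) = q'"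
    "\<forall>m\<in>M. \<forall>m'\<in>M. \<not> replaceable Sig alpha M rho tau m m'"
    unfolding tight_def by blast
  moreover have "aut_wf Sig Q Q0 delta"
    using assms(1) unfolding nrw_wf_def by blast
  ultimately show ?thesis
    using that unfolding tight_transducer_def by blast
qed

theorem theorem13:
  fixes Sig :: "'a set" and Q Q0 :: "'q set" and delta :: "'q \<Rightarrow> 'a \<Rightarrow> 'q set"
    and alpha :: "('q set \<times> 'q set) set"
    and QB Q0B :: "'p set" and deltaB :: "'p \<Rightarrow> 'a \<Rightarrow> 'p set" and alphaB :: "'p set"
  assumes "nrw_wf Sig Q Q0 delta alpha"
    and "gfg Sig Q0 delta (rabin_acc alpha)"
    and "tight Sig Q Q0 delta alpha"
    and "nbw_wf Sig QB Q0B deltaB alphaB"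
    and "gfg Sig Q0B deltaB (buchi_acc alphaB)"
    and "lang Sig Q0B deltaB (buchi_acc alphaB) = lang Sig Q0 delta (rabin_acc alpha)"
  shows "\<exists>alpha' \<subseteq> Q. gfg Sig Q0 delta (buchi_acc alpha') \<and>
           lang Sig Q0 delta (buchi_acc alpha') = lang Sig Q0 delta (rabin_acc alpha)"
proof -
  obtain M :: "nat set" and m0 rho tau where "tight_transducer Sig Q Q0 delta alpha M m0 rho tau"
    using assms(1,3) by (rule tight_transducer_of_tight)
  then interpret tight_transducer Sig Q Q0 delta alpha M m0 rho tau .
  obtain gB where gB: "gfg_strategy Sig Q0B deltaB (buchi_acc alphaB) gB"
    using assms(5) unfolding gfg_def by blast
  have "finite alphaB"
    using assms(4) unfolding nbw_wf_def aut_wf_def by (auto intro: finite_subset)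
  note good = gfg_buchi_good_states[OF gB this assms(6)]
  have "good_states Sig Q Q0 delta (rabin_acc alpha) \<subseteq> Q"
    unfolding good_states_def by blast
  with good show ?thesis
    unfolding gfg_def by blast
qed

end
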